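(* Let $P$ be a special product rule and $X$ a set. Every function $D:X\to\mathbb Q_0[X]$ extends uniquely to a $\mathbb Q$-linear map $\tilde D:\mathbb Q_0[X]\to\mathbb Q_0[X]$ with $\tilde D(x)=D(x)$ for $x\in X$ and $\tilde D(\alpha\beta)=P(\alpha,\tilde D\alpha,\beta,\tilde D\beta)$ for all $\alpha,\beta\in\mathbb Q_0[X]$ (where $P$ is evaluated as a polynomial).
   Context: $\mathbb Q_0[X]$ denotes the set of commutative polynomials over $\mathbb Q$ in variables $X$ with zero constant term (a non-unital commutative $\mathbb Q$-algebra). Terms over $X$ are generated by $u,v::=x\mid 0\mid c\cdot u\mid u+v\mid u*v$ ($c\in\mathbb Q$). A product rule is a term $P$ over $\{x,\dot x,y,\dot y\}$; $P(s_1,\dots,s_4)$ denotes substitution. $u\approx v$ iff $u,v$ denote the same polynomial in $\mathbb Q[X]$ (constructors read as polynomial operations). $P$ is special if $P(x+y,\dot x+\dot y,z,\dot z)\approx P(x,\dot x,z,\dot z)+P(y,\dot y,z,\dot z)$, $P(x,\dot x,y*z,P(y,\dot y,z,\dot z))\approx P(x*y,P(x,\dot x,y,\dot y),z,\dot z)$, and $P(x,\dot x,y,\dot y)\approx P(y,\dot y,x,\dot x)$. *)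

theory Defs
  imports Complex_Main "HOL-Library.Poly_Mapping" "HOL-Library.FuncSet"
begin

text \<open>Commutative polynomials over the rationals in variables of type 'v:
  maps from monomials (exponent vectors, finitely supported) to coefficients.\<close>
type_synonym 'v mpoly = "('v \<Rightarrow>\<^sub>0 nat) \<Rightarrow>\<^sub>0 rat"

definition pvar :: "'v \<Rightarrow> 'v mpoly" where
  "pvar x = Poly_Mapping.single (Poly_Mapping.single x 1) 1"

definition psmult :: "rat \<Rightarrow> 'v mpoly \<Rightarrow> 'v mpoly" where
  "psmult c p = Poly_Mapping.map (\<lambda>a. c * a) p"

definition Q0 :: "'v set \<Rightarrow> 'v mpoly set" where
  "Q0 X = {p :: 'v mpoly. Poly_Mapping.lookup p 0 = 0 \<and> (\<forall>m \<in> Poly_Mapping.keys p. Poly_Mapping.keys m \<subseteq> X)}"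

datatype 'a trm = TVar 'a | TZero | TScal rat "'a trm" | TAdd "'a trm" "'a trm" | TMul "'a trm" "'a trm"

fun teval :: "('a \<Rightarrow> 'v mpoly) \<Rightarrow> 'a trm \<Rightarrow> 'v mpoly" where
  "teval \<rho> (TVar x) = \<rho> x"
| "teval \<rho> TZero = 0"
| "teval \<rho> (TScal c u) = psmult c (teval \<rho> u)"
| "teval \<rho> (TAdd u v) = teval \<rho> u + teval \<rho> v"
| "teval \<rho> (TMul u v) = teval \<rho> u * teval \<rho> v"

fun tsubst :: "('a \<Rightarrow> 'b trm) \<Rightarrow> 'a trm \<Rightarrow> 'b trm" where
  "tsubst \<sigma> (TVar x) = \<sigma> x"
| "tsubst \<sigma> TZero = TZero"
| "tsubst \<sigma> (TScal c u) = TScal c (tsubst \<sigma> u)"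
| "tsubst \<sigma> (TAdd u v) = TAdd (tsubst \<sigma> u) (tsubst \<sigma> v)"
| "tsubst \<sigma> (TMul u v) = TMul (tsubst \<sigma> u) (tsubst \<sigma> v)"

definition tequiv :: "'a trm \<Rightarrow> 'a trm \<Rightarrow> bool" where
  "tequiv u v \<longleftrightarrow> teval pvar u = teval pvar v"

text \<open>Variables of a product rule: x, x', y, y'.\<close>
datatype prvar = PX | PDX | PY | PDY

type_synonym prule = "prvar trm"

definition papp :: "prule \<Rightarrow> 'b trm \<Rightarrow> 'b trm \<Rightarrow> 'b trm \<Rightarrow> 'b trm \<Rightarrow> 'b trm" where
  "papp P s1 s2 s3 s4 = tsubst (\<lambda>v. case v of PX \<Rightarrow> s1 | PDX \<Rightarrow> s2 | PY \<Rightarrow> s3 | PDY \<Rightarrow> s4) P"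

datatype svar = SX | SDX | SY | SDY | SZ | SDZ

definition special :: "prule \<Rightarrow> bool" where
  "special P \<longleftrightarrow>
     tequiv (papp P (TAdd (TVar SX) (TVar SY)) (TAdd (TVar SDX) (TVar SDY)) (TVar SZ) (TVar SDZ))
            (TAdd (papp P (TVar SX) (TVar SDX) (TVar SZ) (TVar SDZ))
                  (papp P (TVar SY) (TVar SDY) (TVar SZ) (TVar SDZ)))
   \<and> tequiv (papp P (TVar SX) (TVar SDX) (TMul (TVar SY) (TVar SZ))
                  (papp P (TVar SY) (TVar SDY) (TVar SZ) (TVar SDZ)))
            (papp P (TMul (TVar SX) (TVar SY)) (papp P (TVar SX) (TVar SDX) (TVar SY) (TVar SDY))
                  (TVar SZ) (TVar SDZ))
   \<and> tequiv (papp P (TVar SX) (TVar SDX) (TVar SY) (TVar SDY))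
            (papp P (TVar SY) (TVar SDY) (TVar SX) (TVar SDX))"

definition peval :: "prule \<Rightarrow> 'v mpoly \<Rightarrow> 'v mpoly \<Rightarrow> 'v mpoly \<Rightarrow> 'v mpoly \<Rightarrow> 'v mpoly" where
  "peval P a b c d = teval (\<lambda>v. case v of PX \<Rightarrow> a | PDX \<Rightarrow> b | PY \<Rightarrow> c | PDY \<Rightarrow> d) P"

end

(*
  Put (a, a') * (b, b') = (a b, P(a, a', b, b')) on pairs of polynomials. Since P is special,
  this product is commutative, associative and additive in each factor, hence Q-bilinear
  (an additive map between Q-vector spaces is Q-linear). A linear map D~ obeys the product
  rule exactly when a |-> (a, D~ a) is multiplicative, so on a monomial x1...xn the value
  D~(x1...xn) is forced to be the second component of (x1, D x1) * ... * (xn, D xn); this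
  is well defined by commutativity and associativity. Extending linearly gives D~, and
  bilinearity carries the product rule from monomials to all of Q0[X]. Conversely, any
  two such maps agree on monomials by induction on the degree, hence everywhere.
*)

theory Submission
  imports Defs "HOL-Library.Multiset"
begin

abbreviation lookup :: "('a \<Rightarrow>\<^sub>0 'b::zero) \<Rightarrow> 'a \<Rightarrow> 'b" where
  "lookup \<equiv> Poly_Mapping.lookup"

abbreviation keys :: "('a \<Rightarrow>\<^sub>0 'b::zero) \<Rightarrow> 'a set" where
  "keys \<equiv> Poly_Mapping.keys"

abbreviation single :: "'a \<Rightarrow> 'b::zero \<Rightarrow> 'a \<Rightarrow>\<^sub>0 'b" where
  "single \<equiv> Poly_Mapping.single"

abbreviation monomial :: "'a \<Rightarrow> 'a \<Rightarrow>\<^sub>0 rat" where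
  "monomial m \<equiv> single m 1"

section \<open>Linear extension from monomials\<close>

lemma psmult_conv_mult: "psmult c p = single 0 c * p"
  unfolding psmult_def by (rule mult_map_scale_conv_mult)

lemma lookup_psmult [simp]: "lookup (psmult c p) m = c * lookup p m"
  by (simp add: psmult_def map.rep_eq when_def)

lemma keys_psmult: "keys (psmult c p) \<subseteq> keys p"
  by (auto simp: in_keys_iff)

lemma psmult_0_left [simp]: "psmult 0 p = 0"
  by (simp add: psmult_conv_mult)

lemma psmult_1 [simp]: "psmult 1 p = p"
  by (simp add: psmult_conv_mult)

lemma psmult_add_left: "psmult (c + d) p = psmult c p + psmult d p"
  by (simp add: psmult_conv_mult single_add distrib_right)

lemma psmult_minus_left: "psmult (- c) p = - psmult c p"
  by (simp add: psmult_conv_mult single_uminus)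

lemma psmult_psmult: "psmult c (psmult d p) = psmult (c * d) p"
  by (simp add: psmult_conv_mult mult_single mult.assoc[symmetric])

lemma psmult_sum: "psmult c (sum f A) = (\<Sum>a\<in>A. psmult c (f a))"
  by (simp add: psmult_conv_mult sum_distrib_left)

lemma psmult_mult_left: "psmult c p * q = psmult c (p * q)"
  by (simp add: psmult_conv_mult mult.assoc)

lemma mult_psmult_right: "p * psmult c q = psmult c (p * q)"
  by (simp add: psmult_conv_mult mult.left_commute)

lemma psmult_single: "psmult c (single m d) = single m (c * d)"
  by (simp add: psmult_conv_mult mult_single)

definition lin_ext :: "('a \<Rightarrow> 'w mpoly) \<Rightarrow> ('a \<Rightarrow>\<^sub>0 rat) \<Rightarrow> 'w mpoly" where
  "lin_ext f p = (\<Sum>m\<in>keys p. psmult (lookup p m) (f m))"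

lemma lin_ext_superset:
  assumes "finite S" "keys p \<subseteq> S"
  shows "lin_ext f p = (\<Sum>m\<in>S. psmult (lookup p m) (f m))"
  unfolding lin_ext_def using assms by (intro sum.mono_neutral_left) (auto simp: in_keys_iff)

lemma lin_ext_zero [simp]: "lin_ext f 0 = 0"
  by (simp add: lin_ext_def)

lemma lin_ext_single [simp]: "lin_ext f (single m c) = psmult c (f m)"
  by (cases "c = 0") (simp_all add: lin_ext_def)

lemma lin_ext_add: "lin_ext f (p + q) = lin_ext f p + lin_ext f q"
proof -
  let ?S = "keys p \<union> keys q"
  have "lin_ext f (p + q) = (\<Sum>m\<in>?S. psmult (lookup (p + q) m) (f m))"
    using keys_add[of p q] by (intro lin_ext_superset) auto
  also have "\<dots> = (\<Sum>m\<in>?S. psmult (lookup p m) (f m)) + (\<Sum>m\<in>?S. psmult (lookup q m) (f m))"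
    by (simp add: lookup_add psmult_add_left sum.distrib)
  also have "\<dots> = lin_ext f p + lin_ext f q"
    by (simp add: lin_ext_superset[of ?S p] lin_ext_superset[of ?S q])
  finally show ?thesis .
qed

lemma lin_ext_psmult: "lin_ext f (psmult c p) = psmult c (lin_ext f p)"
proof -
  have "lin_ext f (psmult c p) = (\<Sum>m\<in>keys p. psmult (lookup (psmult c p) m) (f m))"
    by (rule lin_ext_superset) (simp_all add: keys_psmult)
  then show ?thesis
    by (simp add: lin_ext_def psmult_sum psmult_psmult)
qed

lemma lin_ext_sum: "finite I \<Longrightarrow> lin_ext f (\<Sum>i\<in>I. p i) = (\<Sum>i\<in>I. lin_ext f (p i))"
  by (induction I rule: finite_induct) (simp_all add: lin_ext_add)

lemma lin_ext_cong: "(\<And>m. m \<in> keys p \<Longrightarrow> f m = g m) \<Longrightarrow> lin_ext f p = lin_ext g p"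
  unfolding lin_ext_def by (rule sum.cong) simp_all

lemma lin_ext_mult_left: "lin_ext (\<lambda>m. a * f m) p = a * lin_ext f p"
  by (simp add: lin_ext_def sum_distrib_left mult_psmult_right)

lemma lin_ext_mult_right: "lin_ext (\<lambda>m. f m * a) p = lin_ext f p * a"
  by (simp add: lin_ext_def sum_distrib_right psmult_mult_left)

lemma lin_ext_lin_ext: "lin_ext f (lin_ext g p) = lin_ext (\<lambda>m. lin_ext f (g m)) p"
  unfolding lin_ext_def[of g] lin_ext_def[of "\<lambda>m. lin_ext f (g m)"]
  by (simp add: lin_ext_sum lin_ext_psmult)

lemma lin_ext_monomial [simp]: "lin_ext monomial p = p"
proof (rule poly_mapping_eqI)
  fix k
  show "lookup (lin_ext monomial p) k = lookup p k"
    by (cases "k \<in> keys p") (auto simp: lin_ext_def psmult_single lookup_sum lookup_single when_def in_keys_iff)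
qed

lemma lin_ext_mult:
  fixes p q :: "'u mpoly"
  shows "lin_ext f (p * q) = lin_ext (\<lambda>m. lin_ext (\<lambda>n. f (m + n)) q) p"
proof -
  have "p * q = lin_ext (\<lambda>m. lin_ext (\<lambda>n. monomial m * monomial n) q) p"
    by (simp add: lin_ext_mult_left lin_ext_mult_right)
  then show ?thesis
    by (simp add: lin_ext_lin_ext mult_single)
qed

lemma additive_pair_psmult_of_int:
  fixes f :: "'u mpoly \<Rightarrow> 'u mpoly \<Rightarrow> 'w mpoly"
  assumes add: "\<And>a a' b b'. f (a + b) (a' + b') = f a a' + f b b'"
  shows "f (psmult (of_int k) a) (psmult (of_int k) a') = psmult (of_int k) (f a a')"
proof -
  have zero: "f 0 0 = 0"
    using add[of 0 0 0 0] by simp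
  have nat: "f (psmult (of_nat n) a) (psmult (of_nat n) a') = psmult (of_nat n) (f a a')" for n
    by (induction n) (simp_all add: zero psmult_add_left add)
  have neg: "f (- b) (- b') = - f b b'" for b b'
  proof -
    have "f b b' + f (- b) (- b') = 0"
      using add[of b "- b" b' "- b'", symmetric] zero by simp
    then show ?thesis
      by (simp only: add_eq_0_iff)
  qed
  show ?thesis
  proof (cases k rule: int_cases2)
    case (nonneg n)
    then show ?thesis
      using nat by simp
  next
    case (nonpos n)
    then show ?thesis
      using nat neg by (simp add: psmult_minus_left)
  qed
qed

lemma additive_pair_psmult:
  fixes f :: "'u mpoly \<Rightarrow> 'u mpoly \<Rightarrow> 'w mpoly"
  assumes add: "\<And>a a' b b'. f (a + b) (a' + b') = f a a' + f b b'"
  shows "f (psmult c a) (psmult c a') = psmult c (f a a')"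
proof -
  note int = additive_pair_psmult_of_int[of f, OF add]
  obtain p q where pq: "quotient_of c = (p, q)"
    by (cases "quotient_of c")
  have c: "c = of_int p / of_int q" and q: "q > 0"
    using quotient_of_div[OF pq] quotient_of_denom_pos[OF pq] by simp_all
  have "psmult (of_int q) (f (psmult c a) (psmult c a'))
      = f (psmult (of_int q) (psmult c a)) (psmult (of_int q) (psmult c a'))"
    by (rule int[symmetric])
  also have "\<dots> = f (psmult (of_int p) a) (psmult (of_int p) a')"
    using q by (simp add: psmult_psmult c)
  also have "\<dots> = psmult (of_int p) (f a a')"
    by (rule int)
  finally have "psmult (1 / of_int q) (psmult (of_int q) (f (psmult c a) (psmult c a')))
      = psmult (1 / of_int q) (psmult (of_int p) (f a a'))"
    by simp
  then show ?thesis
    using q by (simp add: psmult_psmult c)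
qed

lemma additive_pair_lin_ext:
  fixes f :: "'u mpoly \<Rightarrow> 'u mpoly \<Rightarrow> 'w mpoly"
  assumes add: "\<And>a a' b b'. f (a + b) (a' + b') = f a a' + f b b'"
  shows "f (lin_ext g p) (lin_ext h p) = lin_ext (\<lambda>m. f (g m) (h m)) p"
proof -
  have "f (\<Sum>m\<in>S. psmult (k m) (g m)) (\<Sum>m\<in>S. psmult (k m) (h m))
      = (\<Sum>m\<in>S. psmult (k m) (f (g m) (h m)))" if "finite S" for S k
    using that
  proof (induction S rule: finite_induct)
    case empty
    show ?case
      using add[of 0 0 0 0] by simp
  next
    case (insert m S)
    then show ?case
      by (simp add: add additive_pair_psmult[of f, OF add])
  qed
  then show ?thesis
    by (simp add: lin_ext_def)
qed

lemma lin_ext_mult_rule: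
  fixes B :: "'w mpoly \<Rightarrow> 'w mpoly \<Rightarrow> 'w mpoly \<Rightarrow> 'w mpoly \<Rightarrow> 'w mpoly"
  assumes left: "\<And>a a' b b' c c'. B (a + b) (a' + b') c c' = B a a' c c' + B b b' c c'"
    and right: "\<And>a a' b b' c c'. B c c' (a + b) (a' + b') = B c c' a a' + B c c' b b'"
    and f: "\<And>m n. m \<in> keys p \<Longrightarrow> n \<in> keys q \<Longrightarrow> f (m + n) = B (monomial m) (f m) (monomial n) (f n)"
  shows "lin_ext f (p * q) = B p (lin_ext f p) q (lin_ext f q)"
proof -
  have "B p (lin_ext f p) q (lin_ext f q) = lin_ext (\<lambda>m. B (monomial m) (f m) q (lin_ext f q)) p"
    using additive_pair_lin_ext[of "\<lambda>a a'. B a a' q (lin_ext f q)" monomial p f] left by simp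
  also have "\<dots> = lin_ext (\<lambda>m. lin_ext (\<lambda>n. B (monomial m) (f m) (monomial n) (f n)) q) p"
  proof (rule lin_ext_cong)
    fix m
    show "B (monomial m) (f m) q (lin_ext f q)
        = lin_ext (\<lambda>n. B (monomial m) (f m) (monomial n) (f n)) q"
      using additive_pair_lin_ext[of "B (monomial m) (f m)" monomial q f] right by simp
  qed
  also have "\<dots> = lin_ext (\<lambda>m. lin_ext (\<lambda>n. f (m + n)) q) p"
    by (intro lin_ext_cong) (simp add: f)
  also have "\<dots> = lin_ext f (p * q)"
    by (rule lin_ext_mult[symmetric])
  finally show ?thesis ..
qed

section \<open>Evaluation of terms\<close>

definition monomial_eval :: "('u \<Rightarrow> 'w mpoly) \<Rightarrow> ('u \<Rightarrow>\<^sub>0 nat) \<Rightarrow> 'w mpoly" where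
  "monomial_eval \<sigma> m = (\<Prod>s\<in>keys m. \<sigma> s ^ lookup m s)"

lemma monomial_eval_superset:
  "finite S \<Longrightarrow> keys m \<subseteq> S \<Longrightarrow> monomial_eval \<sigma> m = (\<Prod>s\<in>S. \<sigma> s ^ lookup m s)"
  unfolding monomial_eval_def by (rule prod.mono_neutral_left) (auto simp: in_keys_iff)

lemma monomial_eval_add: "monomial_eval \<sigma> (m + n) = monomial_eval \<sigma> m * monomial_eval \<sigma> n"
proof -
  let ?S = "keys m \<union> keys n"
  have "monomial_eval \<sigma> (m + n) = (\<Prod>s\<in>?S. \<sigma> s ^ lookup (m + n) s)"
    using keys_add[of m n] by (intro monomial_eval_superset) auto
  also have "\<dots> = (\<Prod>s\<in>?S. \<sigma> s ^ lookup m s) * (\<Prod>s\<in>?S. \<sigma> s ^ lookup n s)"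
    by (simp add: lookup_add power_add prod.distrib)
  also have "\<dots> = monomial_eval \<sigma> m * monomial_eval \<sigma> n"
    by (simp add: monomial_eval_superset[of ?S m] monomial_eval_superset[of ?S n])
  finally show ?thesis .
qed

definition poly_subst :: "('u \<Rightarrow> 'w mpoly) \<Rightarrow> 'u mpoly \<Rightarrow> 'w mpoly" where
  "poly_subst \<sigma> = lin_ext (monomial_eval \<sigma>)"

lemma poly_subst_pvar: "poly_subst \<sigma> (pvar x) = \<sigma> x"
  by (simp add: poly_subst_def pvar_def monomial_eval_def)

lemma poly_subst_zero: "poly_subst \<sigma> 0 = 0"
  by (simp add: poly_subst_def)

lemma poly_subst_add: "poly_subst \<sigma> (p + q) = poly_subst \<sigma> p + poly_subst \<sigma> q"
  by (simp add: poly_subst_def lin_ext_add)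

lemma poly_subst_psmult: "poly_subst \<sigma> (psmult c p) = psmult c (poly_subst \<sigma> p)"
  by (simp add: poly_subst_def lin_ext_psmult)

lemma poly_subst_mult: "poly_subst \<sigma> (p * q) = poly_subst \<sigma> p * poly_subst \<sigma> q"
  by (simp add: poly_subst_def lin_ext_mult monomial_eval_add lin_ext_mult_left lin_ext_mult_right)

lemma teval_eq_poly_subst: "teval \<rho> u = poly_subst \<rho> (teval pvar u)"
  by (induction u)
    (simp_all add: poly_subst_pvar poly_subst_zero poly_subst_add poly_subst_psmult poly_subst_mult)

lemma teval_eq_if_tequiv: "tequiv u v \<Longrightarrow> teval \<rho> u = teval \<rho> v"
  unfolding tequiv_def by (metis teval_eq_poly_subst)

lemma teval_tsubst: "teval \<rho> (tsubst \<sigma> u) = teval (\<lambda>x. teval \<rho> (\<sigma> x)) u"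
  by (induction u) simp_all

lemma teval_papp:
  "teval \<rho> (papp P s1 s2 s3 s4) = peval P (teval \<rho> s1) (teval \<rho> s2) (teval \<rho> s3) (teval \<rho> s4)"
  unfolding papp_def peval_def teval_tsubst
  by (rule arg_cong[where f = "\<lambda>r. teval r P"]) (simp add: fun_eq_iff split: prvar.split)

section \<open>Polynomials without constant term\<close>

definition pos_monomials :: "'v set \<Rightarrow> ('v \<Rightarrow>\<^sub>0 nat) set" where
  "pos_monomials X = {m. m \<noteq> 0 \<and> keys m \<subseteq> X}"

lemma Q0_iff_keys: "p \<in> Q0 X \<longleftrightarrow> keys p \<subseteq> pos_monomials X"
  by (auto simp: Q0_def pos_monomials_def in_keys_iff)

lemma monomial_in_Q0_iff: "monomial m \<in> Q0 X \<longleftrightarrow> m \<in> pos_monomials X"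
  by (simp add: Q0_iff_keys)

lemma single_in_pos_monomials: "x \<in> X \<Longrightarrow> single x 1 \<in> pos_monomials X"
  using lookup_single_eq[of x "1::nat"] by (auto simp: pos_monomials_def simp del: lookup_single_eq)

lemma pos_monomials_add:
  assumes "m \<in> pos_monomials X" "n \<in> pos_monomials X"
  shows "m + n \<in> pos_monomials X"
proof -
  have "m + n \<noteq> 0"
    using \<open>m \<in> pos_monomials X\<close> by (auto simp: pos_monomials_def poly_mapping_eq_iff fun_eq_iff lookup_add)
  then show ?thesis
    using assms keys_add[of m n] by (auto simp: pos_monomials_def)
qed

lemma Q0_zero: "0 \<in> Q0 X"
  by (simp add: Q0_iff_keys)

lemma Q0_add: "p \<in> Q0 X \<Longrightarrow> q \<in> Q0 X \<Longrightarrow> p + q \<in> Q0 X"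
  using keys_add[of p q] by (auto simp: Q0_iff_keys)

lemma Q0_psmult: "p \<in> Q0 X \<Longrightarrow> psmult c p \<in> Q0 X"
  using keys_psmult[of c p] by (auto simp: Q0_iff_keys)

lemma Q0_mult: "p \<in> Q0 X \<Longrightarrow> q \<in> Q0 X \<Longrightarrow> p * q \<in> Q0 X"
  using keys_mult[of p q] by (fastforce simp: Q0_iff_keys intro: pos_monomials_add)

lemma Q0_sum: "(\<And>i. i \<in> I \<Longrightarrow> p i \<in> Q0 X) \<Longrightarrow> (\<Sum>i\<in>I. p i) \<in> Q0 X"
  by (induction I rule: infinite_finite_induct) (simp_all add: Q0_zero Q0_add)

lemma Q0_lin_ext: "(\<And>m. m \<in> keys p \<Longrightarrow> f m \<in> Q0 X) \<Longrightarrow> lin_ext f p \<in> Q0 X"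
  unfolding lin_ext_def by (intro Q0_sum Q0_psmult)

lemma Q0_pvar: "x \<in> X \<Longrightarrow> pvar x \<in> Q0 X"
  unfolding pvar_def monomial_in_Q0_iff by (rule single_in_pos_monomials)

lemma Q0_teval: "(\<And>v. \<rho> v \<in> Q0 X) \<Longrightarrow> teval \<rho> u \<in> Q0 X"
  by (induction u) (simp_all add: Q0_zero Q0_add Q0_mult Q0_psmult)

lemma Q0_peval:
  "a \<in> Q0 X \<Longrightarrow> a' \<in> Q0 X \<Longrightarrow> b \<in> Q0 X \<Longrightarrow> b' \<in> Q0 X \<Longrightarrow> peval P a a' b b' \<in> Q0 X"
  unfolding peval_def by (rule Q0_teval) (simp split: prvar.split)

definition mset_of_monomial :: "('v \<Rightarrow>\<^sub>0 nat) \<Rightarrow> 'v multiset" where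
  "mset_of_monomial m = Abs_multiset (lookup m)"

definition monomial_of_mset :: "'v multiset \<Rightarrow> ('v \<Rightarrow>\<^sub>0 nat)" where
  "monomial_of_mset M = (\<Sum>x\<in>#M. single x 1)"

lemma count_mset_of_monomial: "count (mset_of_monomial m) x = lookup m x"
proof -
  have "finite {x. 0 < lookup m x}"
    by simp
  then show ?thesis
    by (simp add: mset_of_monomial_def)
qed

lemma lookup_monomial_of_mset: "lookup (monomial_of_mset M) x = count M x"
  by (induction M) (simp_all add: monomial_of_mset_def lookup_add lookup_single)

lemma monomial_of_mset_of_monomial: "monomial_of_mset (mset_of_monomial m) = m"
  by (rule poly_mapping_eqI) (simp add: lookup_monomial_of_mset count_mset_of_monomial)

lemma mset_of_monomial_add: "mset_of_monomial (m + n) = mset_of_monomial m + mset_of_monomial n"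
  by (rule multiset_eqI) (simp add: count_mset_of_monomial lookup_add)

lemma mset_of_monomial_single: "mset_of_monomial (single x 1) = {#x#}"
  by (rule multiset_eqI) (simp add: count_mset_of_monomial lookup_single)

lemma set_mset_of_monomial: "set_mset (mset_of_monomial m) = keys m"
  by (auto simp: count_mset_of_monomial in_keys_iff simp flip: count_greater_zero_iff)

lemma pos_monomial_induct [consumes 1, case_names single add]:
  assumes "m \<in> pos_monomials X"
    and base: "\<And>x. x \<in> X \<Longrightarrow> Q (single x 1)"
    and step: "\<And>x n. x \<in> X \<Longrightarrow> n \<in> pos_monomials X \<Longrightarrow> Q n \<Longrightarrow> Q (single x 1 + n)"
  shows "Q m"
proof -
  have "Q (monomial_of_mset M)" if "M \<noteq> {#}" "set_mset M \<subseteq> X" for M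
    using that
  proof (induction M)
    case empty
    then show ?case by simp
  next
    case (add x M)
    show ?case
    proof (cases "M = {#}")
      case True
      then show ?thesis
        using add.prems base by (simp add: monomial_of_mset_def)
    next
      case False
      have "monomial_of_mset M \<in> pos_monomials X"
        using False add.prems
        by (auto simp: pos_monomials_def poly_mapping_eq_iff fun_eq_iff in_keys_iff
            lookup_monomial_of_mset multiset_eq_iff simp flip: count_greater_zero_iff)
      then show ?thesis
        using False add step[of x "monomial_of_mset M"] by (simp add: monomial_of_mset_def)
    qed
  qed
  moreover have "mset_of_monomial m \<noteq> {#}"
    using assms(1) monomial_of_mset_of_monomial[of m]
    by (auto simp: pos_monomials_def monomial_of_mset_def)
  moreover have "set_mset (mset_of_monomial m) \<subseteq> X"
    using assms(1) by (simp add: pos_monomials_def set_mset_of_monomial)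
  ultimately show ?thesis
    using monomial_of_mset_of_monomial[of m] by metis
qed

section \<open>Uniqueness\<close>

definition prule_derivation :: "prule \<Rightarrow> 'v set \<Rightarrow> ('v mpoly \<Rightarrow> 'v mpoly) \<Rightarrow> bool" where
  "prule_derivation P X Dt \<longleftrightarrow> Dt \<in> Q0 X \<rightarrow>\<^sub>E Q0 X
     \<and> (\<forall>a\<in>Q0 X. \<forall>b\<in>Q0 X. Dt (a + b) = Dt a + Dt b)
     \<and> (\<forall>c. \<forall>a\<in>Q0 X. Dt (psmult c a) = psmult c (Dt a))
     \<and> (\<forall>a\<in>Q0 X. \<forall>b\<in>Q0 X. Dt (a * b) = peval P a (Dt a) b (Dt b))"

lemma prule_derivation_eq_lin_ext:
  assumes "prule_derivation P X Dt" "p \<in> Q0 X"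
  shows "Dt p = lin_ext (\<lambda>m. Dt (monomial m)) p"
proof -
  have add: "Dt (a + b) = Dt a + Dt b" and scale: "Dt (psmult c a) = psmult c (Dt a)"
    if "a \<in> Q0 X" "b \<in> Q0 X" for a b c
    using assms(1) that by (auto simp: prule_derivation_def)
  have monomial_in_Q0: "monomial m \<in> Q0 X" if "m \<in> keys p" for m
    using assms(2) that by (auto simp: monomial_in_Q0_iff Q0_iff_keys)
  have "Dt (\<Sum>m\<in>S. psmult (lookup p m) (monomial m)) = (\<Sum>m\<in>S. psmult (lookup p m) (Dt (monomial m)))"
    if "finite S" "S \<subseteq> keys p" for S
    using that
  proof (induction S rule: finite_induct)
    case empty
    show ?case
      using add[OF Q0_zero Q0_zero] by simp
  next
    case (insert m S)
    have "monomial m \<in> Q0 X" "(\<Sum>m\<in>S. psmult (lookup p m) (monomial m)) \<in> Q0 X"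
      using insert.prems by (auto intro!: monomial_in_Q0 Q0_sum Q0_psmult)
    then show ?case
      using insert by (simp add: add Q0_psmult scale)
  qed
  from this[of "keys p"] have "Dt (lin_ext monomial p) = lin_ext (\<lambda>m. Dt (monomial m)) p"
    unfolding lin_ext_def by simp
  then show ?thesis
    by simp
qed

lemma prule_derivations_agree_on_monomials:
  assumes D1: "prule_derivation P X D1" and D2: "prule_derivation P X D2"
    and vars: "\<forall>x\<in>X. D1 (pvar x) = D2 (pvar x)"
    and "m \<in> pos_monomials X"
  shows "D1 (monomial m) = D2 (monomial m)"
  using \<open>m \<in> pos_monomials X\<close>
proof (induction rule: pos_monomial_induct)
  case (single x)
  then show ?case
    using vars by (simp add: pvar_def)
next
  case (add x n)
  have factors: "pvar x \<in> Q0 X" "monomial n \<in> Q0 X"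
    using add by (simp_all add: Q0_pvar monomial_in_Q0_iff)
  have "monomial (single x 1 + n) = pvar x * monomial n"
    by (simp add: pvar_def mult_single)
  then show ?case
    using D1 D2 factors add.IH vars add.hyps(1) by (simp add: prule_derivation_def)
qed

lemma prule_derivation_unique:
  assumes D1: "prule_derivation P X D1" and D2: "prule_derivation P X D2"
    and vars: "\<forall>x\<in>X. D1 (pvar x) = D2 (pvar x)"
  shows "D1 = D2"
proof
  fix p
  show "D1 p = D2 p"
  proof (cases "p \<in> Q0 X")
    case True
    then have "lin_ext (\<lambda>m. D1 (monomial m)) p = lin_ext (\<lambda>m. D2 (monomial m)) p"
      using prule_derivations_agree_on_monomials[OF D1 D2 vars]
      by (intro lin_ext_cong) (auto simp: Q0_iff_keys)
    then show ?thesis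
      using True D1 D2 by (simp add: prule_derivation_eq_lin_ext)
  next
    case False
    then show ?thesis
      using D1 D2 by (simp add: prule_derivation_def PiE_def extensional_def)
  qed
qed

section \<open>Existence\<close>

text \<open>Adjoining the unit \<open>None\<close> turns a commutative semigroup into a commutative monoid, so
  that products over (possibly empty) multisets are available.\<close>

fun option_mult :: "('a \<Rightarrow> 'a \<Rightarrow> 'a) \<Rightarrow> 'a option \<Rightarrow> 'a option \<Rightarrow> 'a option" where
  "option_mult f None y = y"
| "option_mult f x None = x"
| "option_mult f (Some a) (Some b) = Some (f a b)"

lemma option_mult_None_right [simp]: "option_mult f x None = x"
  by (cases x) simp_all

lemma option_mult_commute:
  "(\<And>a b. f a b = f b a) \<Longrightarrow> option_mult f x y = option_mult f y x"
  by (cases x; cases y) simp_all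

lemma option_mult_assoc:
  "(\<And>a b c. f (f a b) c = f a (f b c))
    \<Longrightarrow> option_mult f (option_mult f x y) z = option_mult f x (option_mult f y z)"
  by (cases x; cases y; cases z) simp_all

locale special_prule =
  fixes P :: prule
  assumes special: "special P"
begin

lemma peval_add_left: "peval P (a + b) (a' + b') c c' = peval P a a' c c' + peval P b b' c c'"
  using special unfolding special_def
  by (auto dest!: teval_eq_if_tequiv[where \<rho> = "case_svar a a' b b' c c'"] simp: teval_papp)

lemma peval_assoc:
  "peval P a a' (b * c) (peval P b b' c c') = peval P (a * b) (peval P a a' b b') c c'"
  using special unfolding special_def
  by (auto dest!: teval_eq_if_tequiv[where \<rho> = "case_svar a a' b b' c c'"] simp: teval_papp)

lemma peval_commute: "peval P a a' b b' = peval P b b' a a'"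
  using special unfolding special_def
  by (auto dest!: teval_eq_if_tequiv[where \<rho> = "case_svar a a' b b' a a'"] simp: teval_papp)

lemma peval_add_right: "peval P c c' (a + b) (a' + b') = peval P c c' a a' + peval P c c' b b'"
  by (metis peval_add_left peval_commute)

text \<open>For the Leibniz rule \<open>P = x y' + x' y\<close> this is the multiplication of dual numbers
  \<open>a + \<epsilon> a'\<close>.\<close>

definition dual_mult :: "'v mpoly \<times> 'v mpoly \<Rightarrow> 'v mpoly \<times> 'v mpoly \<Rightarrow> 'v mpoly \<times> 'v mpoly" where
  "dual_mult x y = (fst x * fst y, peval P (fst x) (snd x) (fst y) (snd y))"

lemma dual_mult_commute: "dual_mult x y = dual_mult y x"
  by (simp add: dual_mult_def mult.commute peval_commute)

lemma dual_mult_assoc: "dual_mult (dual_mult x y) z = dual_mult x (dual_mult y z)"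
  by (simp add: dual_mult_def mult.assoc peval_assoc)

definition dual_prod :: "('v \<Rightarrow> 'v mpoly) \<Rightarrow> 'v multiset \<Rightarrow> ('v mpoly \<times> 'v mpoly) option" where
  "dual_prod D M = fold_mset (option_mult dual_mult) None (image_mset (\<lambda>x. Some (pvar x, D x)) M)"

lemma
  shows dual_prod_union: "dual_prod D (M + N) = option_mult dual_mult (dual_prod D M) (dual_prod D N)"
    and dual_prod_singleton: "dual_prod D {#x#} = Some (pvar x, D x)"
proof -
  interpret dual: comm_monoid_mset "option_mult dual_mult" None
  proof
    show "option_mult dual_mult (option_mult dual_mult a b) c
        = option_mult dual_mult a (option_mult dual_mult b c)" for a b c
      by (rule option_mult_assoc) (rule dual_mult_assoc)
    show "option_mult dual_mult a b = option_mult dual_mult b a" for a b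
      by (rule option_mult_commute) (rule dual_mult_commute)
  qed simp
  show "dual_prod D (M + N) = option_mult dual_mult (dual_prod D M) (dual_prod D N)"
    using dual.union by (simp add: dual_prod_def dual.eq_fold)
  show "dual_prod D {#x#} = Some (pvar x, D x)"
    using dual.singleton by (simp add: dual_prod_def dual.eq_fold)
qed

definition monomial_deriv :: "('v \<Rightarrow> 'v mpoly) \<Rightarrow> ('v \<Rightarrow>\<^sub>0 nat) \<Rightarrow> 'v mpoly" where
  "monomial_deriv D m = snd (the (dual_prod D (mset_of_monomial m)))"

text \<open>Here and below \<open>One_nat_def\<close> is removed from the simpset: it would rewrite the exponent
  \<open>1 :: nat\<close> in \<open>single x 1\<close> to \<open>Suc 0\<close> before the lemmas about \<open>single x 1\<close> can fire.\<close>

lemma monomial_deriv_single: "monomial_deriv D (single x 1) = D x"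
  by (simp add: monomial_deriv_def mset_of_monomial_single dual_prod_singleton del: One_nat_def)

lemma dual_prod_pos_monomial:
  assumes D: "\<forall>x\<in>X. D x \<in> Q0 X" and "m \<in> pos_monomials X"
  shows "dual_prod D (mset_of_monomial m) = Some (monomial m, monomial_deriv D m)"
    and "monomial_deriv D m \<in> Q0 X"
proof -
  have "\<exists>d\<in>Q0 X. dual_prod D (mset_of_monomial m) = Some (monomial m, d)"
    using \<open>m \<in> pos_monomials X\<close>
  proof (induction rule: pos_monomial_induct)
    case (single x)
    then show ?case
      using D by (simp add: mset_of_monomial_single dual_prod_singleton pvar_def del: One_nat_def)
  next
    case (add x n)
    then obtain d where d: "d \<in> Q0 X" "dual_prod D (mset_of_monomial n) = Some (monomial n, d)"
      by blast
    have "dual_prod D (mset_of_monomial (single x 1 + n))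
        = option_mult dual_mult (Some (pvar x, D x)) (Some (monomial n, d))"
      by (simp only: mset_of_monomial_add mset_of_monomial_single dual_prod_union
          dual_prod_singleton d)
    then have "dual_prod D (mset_of_monomial (single x 1 + n))
        = Some (pvar x * monomial n, peval P (pvar x) (D x) (monomial n) d)"
      by (simp add: dual_mult_def)
    moreover have "pvar x * monomial n = monomial (single x 1 + n)"
      by (simp add: pvar_def mult_single)
    moreover have "peval P (pvar x) (D x) (monomial n) d \<in> Q0 X"
      using add D d by (simp add: Q0_peval Q0_pvar monomial_in_Q0_iff)
    ultimately show ?case
      by auto
  qed
  then show "dual_prod D (mset_of_monomial m) = Some (monomial m, monomial_deriv D m)"
    and "monomial_deriv D m \<in> Q0 X"
    by (auto simp: monomial_deriv_def)
qed

lemma monomial_deriv_add: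
  assumes D: "\<forall>x\<in>X. D x \<in> Q0 X" and "m \<in> pos_monomials X" "n \<in> pos_monomials X"
  shows "monomial_deriv D (m + n)
    = peval P (monomial m) (monomial_deriv D m) (monomial n) (monomial_deriv D n)"
  using dual_prod_pos_monomial(1)[OF D] assms(2,3)
  by (simp add: monomial_deriv_def[of D "m + n"] mset_of_monomial_add dual_prod_union dual_mult_def)

definition extension :: "'v set \<Rightarrow> ('v \<Rightarrow> 'v mpoly) \<Rightarrow> 'v mpoly \<Rightarrow> 'v mpoly" where
  "extension X D = restrict (lin_ext (monomial_deriv D)) (Q0 X)"

lemma extension_pvar: "x \<in> X \<Longrightarrow> extension X D (pvar x) = D x"
  by (simp add: extension_def Q0_pvar) (simp add: pvar_def monomial_deriv_single del: One_nat_def)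

lemma prule_derivation_extension:
  assumes D: "\<forall>x\<in>X. D x \<in> Q0 X"
  shows "prule_derivation P X (extension X D)"
proof -
  let ?L = "lin_ext (monomial_deriv D)"
  have closed: "?L p \<in> Q0 X" if "p \<in> Q0 X" for p
    using that by (intro Q0_lin_ext dual_prod_pos_monomial(2)[OF D]) (auto simp: Q0_iff_keys)
  have mult: "?L (a * b) = peval P a (?L a) b (?L b)" if "a \<in> Q0 X" "b \<in> Q0 X" for a b
    using that
    by (intro lin_ext_mult_rule peval_add_left peval_add_right monomial_deriv_add[OF D])
      (auto simp: Q0_iff_keys)
  show ?thesis
    using closed mult unfolding prule_derivation_def extension_def
    by (auto simp: Q0_add Q0_psmult Q0_mult lin_ext_add lin_ext_psmult)
qed

end

theorem mainTheorem10:
  fixes P :: prule and X :: "'v set" and D :: "'v \<Rightarrow> 'v mpoly"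
  assumes "special P"
    and "\<forall>x\<in>X. D x \<in> Q0 X"
  shows "\<exists>!Dt. Dt \<in> Q0 X \<rightarrow>\<^sub>E Q0 X
          \<and> (\<forall>a\<in>Q0 X. \<forall>b\<in>Q0 X. Dt (a + b) = Dt a + Dt b)
          \<and> (\<forall>c. \<forall>a\<in>Q0 X. Dt (psmult c a) = psmult c (Dt a))
          \<and> (\<forall>x\<in>X. Dt (pvar x) = D x)
          \<and> (\<forall>a\<in>Q0 X. \<forall>b\<in>Q0 X. Dt (a * b) = peval P a (Dt a) b (Dt b))"
proof -
  interpret special_prule P
    by (rule special_prule.intro) (fact assms(1))
  have existence: "prule_derivation P X (extension X D)" "\<forall>x\<in>X. extension X D (pvar x) = D x"
    using assms(2) by (simp_all add: prule_derivation_extension extension_pvar)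
  have uniqueness: "Dt = extension X D"
    if "prule_derivation P X Dt" "\<forall>x\<in>X. Dt (pvar x) = D x" for Dt
    using that existence by (simp add: prule_derivation_unique)
  show ?thesis
    using existence uniqueness unfolding prule_derivation_def
    by (intro ex1I[of _ "extension X D"]) blast+
qed

end
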